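(* Let $X$ be a finite set, $t_1<\dots<t_M$ real numbers and $(\mathcal{P}^{t_m})_{m\le M}$ partitions of $X$, with associated continuous-indexed Multiscale Clustering Filtration $(K^t)_{t\ge t_1}$ and partitions $\mathcal{P}^t$. For each $t\ge t_1$, the $0$-th Betti number $\beta_0^t$ of $K^t$ satisfies: (i) $\beta_0^t\le \min_{s\le t}\#\mathcal{P}^s$; (ii) $\beta_0^t=\#\mathcal{P}^t$ if and only if $\mathcal{P}^t$ is non-fractured.
   Context: A partition of $X$ is a collection of non-empty pairwise disjoint subsets (clusters) whose union is $X$; $\#\mathcal{P}$ is its number of clusters. For partitions $\mathcal{P},\mathcal{Q}$, $\mathcal{P}\le\mathcal{Q}$ ($\mathcal{P}$ refines $\mathcal{Q}$) means every cluster of $\mathcal{P}$ is contained in a cluster of $\mathcal{Q}$. For a finite non-empty set $C$, $\Delta C$ is the set of all non-empty subsets of $C$. The MCF is $K^{t_m}:=\bigcup_{l\le m}\bigcup_{C\in\mathcal{P}^{t_l}}\Delta C$. For real $t$, set $\mathcal{P}^t:=\mathcal{P}^{t_m}$ where $m$ is the largest index with $t_m\le t$ (and $\mathcal{P}^t:=\mathcal{P}^{t_1}$ if $t<t_1$), and for $t\ge t_1$ set $K^t:=K^{t_m}$ with the same $m$. $\beta_0^t$ is the rank of $H_0(K^t)$, i.e. the number of connected components of $K^t$. The partition $\mathcal{P}^t$ is non-fractured if $\mathcal{P}^s\le\mathcal{P}^t$ for all $s\le t$, and fractured otherwise. *)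

theory Defs
  imports Complex_Main "HOL-Library.Disjoint_Sets"
begin

text \<open>Partitions are indexed by m in {1..M}; times by t :: nat => real.\<close>

definition refines :: "'a set set \<Rightarrow> 'a set set \<Rightarrow> bool" where
  "refines P Q \<longleftrightarrow> (\<forall>C\<in>P. \<exists>D\<in>Q. C \<subseteq> D)"

definition Delta :: "'a set \<Rightarrow> 'a set set" where
  "Delta C = {S. S \<subseteq> C \<and> S \<noteq> {}}"

definition MCF :: "(nat \<Rightarrow> 'a set set) \<Rightarrow> nat \<Rightarrow> 'a set set" where
  "MCF P m = (\<Union>l\<in>{1..m}. \<Union>C\<in>P l. Delta C)"

text \<open>Largest index m in {1..M} with t_m <= s (meaningful for s >= t_1).\<close>
definition idx :: "(nat \<Rightarrow> real) \<Rightarrow> nat \<Rightarrow> real \<Rightarrow> nat" where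
  "idx tt M s = (GREATEST m. m \<in> {1..M} \<and> tt m \<le> s)"

definition Pt :: "(nat \<Rightarrow> real) \<Rightarrow> nat \<Rightarrow> (nat \<Rightarrow> 'a set set) \<Rightarrow> real \<Rightarrow> 'a set set" where
  "Pt tt M P s = (if s < tt 1 then P 1 else P (idx tt M s))"

definition Kt :: "(nat \<Rightarrow> real) \<Rightarrow> nat \<Rightarrow> (nat \<Rightarrow> 'a set set) \<Rightarrow> real \<Rightarrow> 'a set set" where
  "Kt tt M P s = MCF P (idx tt M s)"

text \<open>Connected components of an abstract simplicial complex K: vertices are the
  elements of simplices, two vertices are adjacent if they lie in a common simplex;
  beta_0 is the number of classes of the transitive closure.\<close>
definition adj :: "'a set set \<Rightarrow> ('a \<times> 'a) set" where
  "adj K = {(x, y). \<exists>\<sigma>\<in>K. x \<in> \<sigma> \<and> y \<in> \<sigma>}"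

definition beta0 :: "'a set set \<Rightarrow> nat" where
  "beta0 K = card ((\<Union>K) // ((adj K)\<^sup>+))"

definition non_fractured :: "(nat \<Rightarrow> real) \<Rightarrow> nat \<Rightarrow> (nat \<Rightarrow> 'a set set) \<Rightarrow> real \<Rightarrow> bool" where
  "non_fractured tt M P t \<longleftrightarrow> (\<forall>s\<le>t. refines (Pt tt M P s) (Pt tt M P t))"

end

theory Submission
  imports Defs
begin

text \<open>
  For a family of sets, adj relates two points lying in a common member; for a partition it is
  the equivalence relation whose classes are the clusters. The simplices of K^{t_m} are the
  non-empty subsets of clusters of P^{t_1}, ..., P^{t_m}, so its components are the classes of
  the transitive closure of the union of these relations: the finest common coarsening of the
  partitions. Coarsening only merges clusters, which gives (i). The coarsening has as many classes
  as P^{t_m} only if it equals P^{t_m}, and that happens exactly when every P^{t_l} with l <= m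
  refines P^{t_m}, which gives (ii).
\<close>

lemma finite_refines_card_eq:
  assumes "finite (A//R)" "R \<subseteq> S" "equiv A R" "equiv A S" "card (A//S) = card (A//R)"
  shows "R = S"
proof
  have "card ((\<lambda>X. S``X) ` (A//R)) = card (A//R)"
    using assms by (simp add: refines_equiv_image_eq)
  then have inj: "inj_on (\<lambda>X. S``X) (A//R)"
    by (rule eq_card_imp_inj_on[OF assms(1)])
  show "S \<subseteq> R"
  proof
    fix p assume "p \<in> S"
    then obtain x y where p: "p = (x, y)" "(x, y) \<in> S" by (cases p) auto
    then have A: "x \<in> A" "y \<in> A" using assms(4) by (auto dest: equiv_type)
    have "S``(R``{x}) = S``(R``{y})"
      using assms(2-4) p(2) by (simp add: refines_equiv_class_eq2 equiv_class_eq)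
    then have "R``{x} = R``{y}"
      by (rule inj_onD[OF inj _ quotientI[OF A(1)] quotientI[OF A(2)]])
    then show "p \<in> R" using assms(3) A p(1) by (simp add: eq_equiv_class_iff)
  qed
qed (rule assms(2))

lemma equiv_trancl_UN:
  assumes "I \<noteq> {}" "\<And>i. i \<in> I \<Longrightarrow> equiv A (R i)"
  shows "equiv A ((\<Union>i\<in>I. R i)\<^sup>+)"
proof (rule equivI)
  show "(\<Union>i\<in>I. R i)\<^sup>+ \<subseteq> A \<times> A"
    using assms(2) by (intro trancl_subset_Sigma) (auto dest: equiv_type)
  obtain i where "i \<in> I" using assms(1) by blast
  then show "refl_on A ((\<Union>i\<in>I. R i)\<^sup>+)"
    using assms(2) equiv_type[OF assms(2)] by (force simp: refl_on_def equiv_def)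
  show "sym ((\<Union>i\<in>I. R i)\<^sup>+)"
    using assms(2) by (intro sym_trancl sym_UNION) (auto simp: equiv_def)
qed simp

lemma equiv_adj_partition: "partition_on A P \<Longrightarrow> equiv A (adj P)"
  unfolding adj_def by (rule equiv_partition_on)

lemma quotient_adj_partition: "partition_on A P \<Longrightarrow> A // adj P = P"
  unfolding adj_def by (rule partition_on_eq_quotient)

lemma refines_iff_adj_subset:
  assumes P: "partition_on A P" and Q: "partition_on A Q"
  shows "refines P Q \<longleftrightarrow> adj P \<subseteq> adj Q"
proof
  assume ref: "refines P Q"
  show "adj P \<subseteq> adj Q"
  proof
    fix p assume "p \<in> adj P"
    then obtain C x y where C: "C \<in> P" "x \<in> C" "y \<in> C" "p = (x, y)" by (auto simp: adj_def)
    moreover obtain D where "D \<in> Q" "C \<subseteq> D" using ref C(1) by (auto simp: refines_def)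
    ultimately show "p \<in> adj Q" by (auto simp: adj_def)
  qed
next
  assume sub: "adj P \<subseteq> adj Q"
  show "refines P Q" unfolding refines_def
  proof
    fix C assume C: "C \<in> P"
    have "C \<noteq> {}" using C partition_onD3[OF P] by auto
    then obtain x where x: "x \<in> C" by blast
    then have "x \<in> \<Union>Q" using C partition_onD1[OF P] partition_onD1[OF Q] by blast
    then obtain D where D: "D \<in> Q" "x \<in> D" by blast
    have "C \<subseteq> D"
    proof
      fix y assume "y \<in> C"
      then have "(x, y) \<in> adj Q" using sub C x by (auto simp: adj_def)
      then obtain D' where D': "D' \<in> Q" "x \<in> D'" "y \<in> D'" by (auto simp: adj_def)
      then have "D' = D" using D disjointD[OF partition_onD2[OF Q]] by blast
      then show "y \<in> D" using D' by simp
    qed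
    then show "\<exists>D\<in>Q. C \<subseteq> D" using D(1) by blast
  qed
qed

lemma Union_MCF: "\<Union> (MCF P m) = (\<Union>l\<in>{1..m}. \<Union> (P l))"
  unfolding MCF_def Delta_def by blast

lemma adj_MCF: "adj (MCF P m) = (\<Union>l\<in>{1..m}. adj (P l))"
  unfolding adj_def MCF_def Delta_def by blast

context
  fixes X :: "'a set" and P :: "nat \<Rightarrow> 'a set set" and m :: nat
  assumes finite_X: "finite X" and m_pos: "1 \<le> m"
    and partitions: "\<And>l. l \<in> {1..m} \<Longrightarrow> partition_on X (P l)"
begin

lemma beta0_MCF_eq_card_quotient: "beta0 (MCF P m) = card (X // (\<Union>l\<in>{1..m}. adj (P l))\<^sup>+)"
proof -
  have "\<Union> (MCF P m) = X"
    using m_pos partitions by (auto simp: Union_MCF partition_on_def)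
  then show ?thesis by (simp add: beta0_def adj_MCF)
qed

lemma equiv_MCF_components: "equiv X ((\<Union>l\<in>{1..m}. adj (P l))\<^sup>+)"
  using m_pos partitions by (intro equiv_trancl_UN equiv_adj_partition) auto

lemma adj_subset_MCF_components:
  "l \<in> {1..m} \<Longrightarrow> adj (P l) \<subseteq> (\<Union>l\<in>{1..m}. adj (P l))\<^sup>+"
  by (blast intro: r_into_trancl')

lemma beta0_MCF_le_card:
  assumes l: "l \<in> {1..m}"
  shows "beta0 (MCF P m) \<le> card (P l)"
proof -
  have part: "partition_on X (P l)" using partitions l .
  have "card (X // (\<Union>l\<in>{1..m}. adj (P l))\<^sup>+) \<le> card (X // adj (P l))"
    by (rule finite_refines_card_le[OF _ adj_subset_MCF_components[OF l]
          equiv_adj_partition[OF part] equiv_MCF_components])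
      (simp add: quotient_adj_partition[OF part] finite_elements[OF finite_X part])
  then show ?thesis
    by (simp add: beta0_MCF_eq_card_quotient quotient_adj_partition[OF part])
qed

lemma beta0_MCF_eq_card_iff:
  "beta0 (MCF P m) = card (P m) \<longleftrightarrow> (\<forall>l\<in>{1..m}. refines (P l) (P m))"
proof -
  let ?R = "(\<Union>l\<in>{1..m}. adj (P l))\<^sup>+"
  have m: "m \<in> {1..m}" using m_pos by simp
  note part = partitions[OF m] and adj_sub = adj_subset_MCF_components[OF m]
  have "beta0 (MCF P m) = card (P m) \<longleftrightarrow> ?R = adj (P m)"
  proof
    assume "beta0 (MCF P m) = card (P m)"
    then have "card (X // ?R) = card (X // adj (P m))"
      by (simp add: beta0_MCF_eq_card_quotient quotient_adj_partition[OF part])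
    with finite_elements[OF finite_X part] have "adj (P m) = ?R"
      by (intro finite_refines_card_eq[OF _ adj_sub equiv_adj_partition[OF part]
          equiv_MCF_components]) (simp_all add: quotient_adj_partition[OF part])
    then show "?R = adj (P m)" ..
  qed (simp add: beta0_MCF_eq_card_quotient quotient_adj_partition[OF part])
  also have "\<dots> \<longleftrightarrow> (\<forall>l\<in>{1..m}. adj (P l) \<subseteq> adj (P m))"
  proof
    assume "\<forall>l\<in>{1..m}. adj (P l) \<subseteq> adj (P m)"
    then have "?R \<subseteq> (adj (P m))\<^sup>+" by (intro trancl_mono_subset) blast
    also have "\<dots> = adj (P m)"
      using equiv_adj_partition[OF part] by (simp add: equiv_def)
    finally show "?R = adj (P m)" using adj_sub by blast
  qed (use adj_subset_MCF_components in blast)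
  also have "\<dots> \<longleftrightarrow> (\<forall>l\<in>{1..m}. refines (P l) (P m))"
    using refines_iff_adj_subset[OF partitions part] by blast
  finally show ?thesis .
qed

end

context
  fixes tt :: "nat \<Rightarrow> real" and M :: nat
  assumes M_pos: "1 \<le> M"
    and tt_strict_mono: "\<And>i j. 1 \<le> i \<Longrightarrow> i < j \<Longrightarrow> j \<le> M \<Longrightarrow> tt i < tt j"
begin

lemma
  assumes "tt 1 \<le> s"
  shows idx_in_range: "idx tt M s \<in> {1..M}"
    and tt_idx_le: "tt (idx tt M s) \<le> s"
    and le_idx: "k \<in> {1..M} \<Longrightarrow> tt k \<le> s \<Longrightarrow> k \<le> idx tt M s"
proof -
  let ?admissible = "\<lambda>k. k \<in> {1..M} \<and> tt k \<le> s"
  have bounded: "\<And>k. ?admissible k \<Longrightarrow> k \<le> M" by simp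
  have "?admissible 1" using assms M_pos by simp
  then have "?admissible (idx tt M s)"
    unfolding idx_def by (rule GreatestI_nat) (rule bounded)
  then show "idx tt M s \<in> {1..M}" "tt (idx tt M s) \<le> s" by auto
  show "k \<le> idx tt M s" if "k \<in> {1..M}" "tt k \<le> s" for k
    unfolding idx_def using that by (intro Greatest_le_nat[of ?admissible k M]) auto
qed

lemma tt_mono: "l \<in> {1..M} \<Longrightarrow> k \<le> l \<Longrightarrow> 1 \<le> k \<Longrightarrow> tt k \<le> tt l"
  using tt_strict_mono[of k l] by (cases "k = l") auto

lemma idx_tt:
  assumes l: "l \<in> {1..M}"
  shows "idx tt M (tt l) = l"
  unfolding idx_def
proof (rule Greatest_equality)
  show "l \<in> {1..M} \<and> tt l \<le> tt l" using l by simp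
  fix k assume "k \<in> {1..M} \<and> tt k \<le> tt l"
  then show "k \<le> l" using l tt_strict_mono[of l k] by force
qed

lemma Pt_tt:
  assumes l: "l \<in> {1..M}"
  shows "Pt tt M P (tt l) = P l"
proof -
  have "tt 1 \<le> tt l" using l by (intro tt_mono) auto
  then show ?thesis by (simp add: Pt_def idx_tt[OF l])
qed

lemma Pt_history:
  assumes t: "tt 1 \<le> t"
  shows "Pt tt M P ` {..t} = P ` {1..idx tt M t}"
proof (intro equalityI subsetI)
  fix Q assume "Q \<in> Pt tt M P ` {..t}"
  then obtain s where s: "s \<le> t" "Q = Pt tt M P s" by auto
  show "Q \<in> P ` {1..idx tt M t}"
  proof (cases "s < tt 1")
    case True
    then show ?thesis using s idx_in_range[OF t] by (simp add: Pt_def)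
  next
    case False
    then have s1: "tt 1 \<le> s" by simp
    have "idx tt M s \<le> idx tt M t"
      using idx_in_range[OF s1] tt_idx_le[OF s1] s(1) by (intro le_idx[OF t]) auto
    then show ?thesis
      using False s idx_in_range[OF s1] by (simp add: Pt_def)
  qed
next
  fix Q assume "Q \<in> P ` {1..idx tt M t}"
  then obtain l where l: "l \<in> {1..idx tt M t}" "Q = P l" by blast
  then have lM: "l \<in> {1..M}" using idx_in_range[OF t] by auto
  have "tt l \<le> tt (idx tt M t)"
    using l(1) idx_in_range[OF t] by (intro tt_mono) auto
  then have "tt l \<le> t" using tt_idx_le[OF t] by linarith
  then show "Q \<in> Pt tt M P ` {..t}"
    using l(2) Pt_tt[OF lM, of P] by (intro image_eqI[of _ _ "tt l"]) auto
qed

end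

theorem proposition3:
  fixes X :: "'a set" and M :: nat and tt :: "nat \<Rightarrow> real"
    and P :: "nat \<Rightarrow> 'a set set" and t :: real
  assumes "finite X"
    and "M \<ge> 1"
    and "\<And>i j. 1 \<le> i \<Longrightarrow> i < j \<Longrightarrow> j \<le> M \<Longrightarrow> tt i < tt j"
    and "\<And>m. m \<in> {1..M} \<Longrightarrow> partition_on X (P m)"
    and "t \<ge> tt 1"
  shows "beta0 (Kt tt M P t) \<le> Min {card (Pt tt M P s) | s. s \<le> t}
    \<and> (beta0 (Kt tt M P t) = card (Pt tt M P t) \<longleftrightarrow> non_fractured tt M P t)"
proof -
  define m where "m = idx tt M t"
  have m: "m \<in> {1..M}" unfolding m_def using assms(2,3,5) by (rule idx_in_range)
  have partitions: "\<And>l. l \<in> {1..m} \<Longrightarrow> partition_on X (P l)" using m assms(4) by simp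
  have K: "Kt tt M P t = MCF P m" by (simp add: Kt_def m_def)
  have Pt: "Pt tt M P t = P m" using assms(5) by (simp add: Pt_def m_def)
  have history: "Pt tt M P ` {..t} = P ` {1..m}"
    unfolding m_def using assms(2,3,5) by (rule Pt_history)
  have "{card (Pt tt M P s) | s. s \<le> t} = card ` Pt tt M P ` {..t}"
    by (auto simp: setcompr_eq_image atMost_def)
  then have cards: "{card (Pt tt M P s) | s. s \<le> t} = card ` P ` {1..m}"
    by (simp only: history)
  have "non_fractured tt M P t \<longleftrightarrow> (\<forall>Q \<in> Pt tt M P ` {..t}. refines Q (Pt tt M P t))"
    by (auto simp: non_fractured_def)
  then have non_fractured_iff: "non_fractured tt M P t \<longleftrightarrow> (\<forall>l\<in>{1..m}. refines (P l) (P m))"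
    by (simp add: history Pt)
  have m_pos: "1 \<le> m" using m by simp
  have "beta0 (MCF P m) \<le> Min (card ` P ` {1..m})"
    using m_pos beta0_MCF_le_card[where P=P, OF assms(1) m_pos partitions] by (subst Min_ge_iff) auto
  moreover have "beta0 (MCF P m) = card (P m) \<longleftrightarrow> non_fractured tt M P t"
    using beta0_MCF_eq_card_iff[where P=P, OF assms(1) m_pos partitions] non_fractured_iff by simp
  ultimately show ?thesis by (simp add: K Pt cards)
qed

end
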